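(* Let $t\ge0$ and $b\in\mathcal B_{[2t]}$. Then $b^e\in\mathcal B_{[2t]}$, and: (i) $Q_1(b)=Q_1(b^e)$; (ii) $Q_1\big(Q_1(b)^e\big)=b+b^e$; (iii) $P\big(Q_1(b)^e\big)=Q_1(b)$; (iv) $P(b)=0=P(b^e)$; (v) $Q_1\big(Q_1(b\,x_{2t+1})^e\big)=Q_1(b\,x_{2t+1})$; (vi) $P\big(Q_1(b\,x_{2t+1})\big)=0$; (vii) $P\big(Q_1(b\,x_{2t+1})^e\big)=0$.
   Context: Over $\mathbb F_2$, $R=\Lambda(t_i:i\ge1)\otimes\Lambda(x_i:i\ge1)$ with basis the monomials $t_Ix_J$ ($I,J\subset\mathbb N_+$ finite, $t_I=\prod_{i\in I}t_i$, $x_J=\prod_{j\in J}x_j$, $t_It_K=0$ if $I\cap K\neq\emptyset$), with linear operators $Q_1(t_Ix_J)=\sum_{j\in J}t_jt_Ix_{J\setminus\{j\}}$ and $P(t_Ix_J)=\sum_{K\subseteq J,|K|=2}t_Kt_Ix_{J\setminus K}$. The exchange operation is the linear map $(-)^e:R\to R$, $(t_Ix_J)^e=t_Jx_I$ (interchanging $t_i$ and $x_i$). The sets $\mathcal B_{[n]}\subset R$ are defined inductively: $\mathcal B_{[0]}=\{1\}$; given $\mathcal B_{[2t]}$, $\mathcal B_{[2t+1]}=\{Q_1(b\,x_{2t+1}):b\in\mathcal B_{[2t]}\}\cup\{Q_1(b\,x_{2t+1})^e:b\in\mathcal B_{[2t]}\}$ and $\mathcal B_{[2t+2]}=\{Q_1(b\,x_{2t+1})\,x_{2t+2}:b\in\mathcal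 B_{[2t]}\}\cup\{Q_1(b\,x_{2t+1})^e\,t_{2t+2}:b\in\mathcal B_{[2t]}\}$ (products taken in $R$). *)

theory Defs
  imports Main
begin

text \<open>Elements of R = Lambda(t_i) (x) Lambda(x_i) over F_2.
  A monomial t_I x_J is the pair (I, J) of finite sets of positive naturals.
  An element of R is represented by the finite set of monomials occurring with
  coefficient 1; addition is symmetric difference, 0 is the empty set.\<close>

type_synonym mon = "nat set \<times> nat set"
type_synonym relt = "mon set"

definition lsum :: "('a \<Rightarrow> relt) \<Rightarrow> 'a set \<Rightarrow> relt" where
  "lsum F A = {m. odd (card {a \<in> A. m \<in> F a})}"

definition radd :: "relt \<Rightarrow> relt \<Rightarrow> relt" where
  "radd a b = (a - b) \<union> (b - a)"

definition lin :: "(mon \<Rightarrow> relt) \<Rightarrow> relt \<Rightarrow> relt" where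
  "lin f v = lsum f v"

text \<open>Product of monomials (exterior in both families of generators; signs vanish over F_2).\<close>
definition mmul :: "mon \<Rightarrow> mon \<Rightarrow> relt" where
  "mmul m n = (if fst m \<inter> fst n = {} \<and> snd m \<inter> snd n = {}
               then {(fst m \<union> fst n, snd m \<union> snd n)} else {})"

definition rmul :: "relt \<Rightarrow> relt \<Rightarrow> relt" where
  "rmul a b = lsum (\<lambda>(m, n). mmul m n) (a \<times> b)"

definition tg :: "nat \<Rightarrow> relt" where "tg i = {({i}, {})}"
definition xg :: "nat \<Rightarrow> relt" where "xg i = {({}, {i})}"
definition rone :: relt where "rone = {({}, {})}"

definition Q1m :: "mon \<Rightarrow> relt" where
  "Q1m m = lsum (\<lambda>j. mmul ({j}, {}) (fst m, snd m - {j})) (snd m)"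
definition Q1 :: "relt \<Rightarrow> relt" where "Q1 = lin Q1m"

definition Pm :: "mon \<Rightarrow> relt" where
  "Pm m = lsum (\<lambda>K. mmul (K, {}) (fst m, snd m - K)) {K. K \<subseteq> snd m \<and> card K = 2}"
definition Pop :: "relt \<Rightarrow> relt" where "Pop = lin Pm"

definition exm :: "mon \<Rightarrow> relt" where "exm m = {(snd m, fst m)}"
definition exch :: "relt \<Rightarrow> relt" where "exch = lin exm"

fun Bev :: "nat \<Rightarrow> relt set" where
  "Bev 0 = {rone}"
| "Bev (Suc t) =
     {rmul (Q1 (rmul b (xg (2*t+1)))) (xg (2*t+2)) | b. b \<in> Bev t} \<union>
     {rmul (exch (Q1 (rmul b (xg (2*t+1))))) (tg (2*t+2)) | b. b \<in> Bev t}"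

definition Bodd :: "nat \<Rightarrow> relt set" where
  "Bodd t = {Q1 (rmul b (xg (2*t+1))) | b. b \<in> Bev t} \<union>
            {exch (Q1 (rmul b (xg (2*t+1)))) | b. b \<in> Bev t}"

definition B :: "nat \<Rightarrow> relt set" where
  "B n = (if even n then Bev (n div 2) else Bodd (n div 2))"

end

theory Submission
  imports Defs "HOL-Library.Z2" "HOL-Library.Disjoint_Sets"
begin

text \<open>Right multiplication by a generator interacts with the operators through six rules,
  checked on monomials and extended linearly:
  \<open>Q\<^sub>1(v x\<^sub>i) = Q\<^sub>1(v) x\<^sub>i + v t\<^sub>i\<close>, \<open>Q\<^sub>1(v t\<^sub>i) = Q\<^sub>1(v) t\<^sub>i\<close>,
  \<open>P(v x\<^sub>i) = P(v) x\<^sub>i + Q\<^sub>1(v) t\<^sub>i\<close>, \<open>P(v t\<^sub>i) = P(v) t\<^sub>i\<close>,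
  \<open>(v x\<^sub>i)\<^sup>e = v\<^sup>e t\<^sub>i\<close> and \<open>(v t\<^sub>i)\<^sup>e = v\<^sup>e x\<^sub>i\<close>.
  With them, if \<open>b\<close> satisfies (i)--(iv) together with \<open>Q\<^sub>1 Q\<^sub>1 b = 0\<close> and \<open>P Q\<^sub>1 b = 0\<close>,
  then \<open>c = Q\<^sub>1(b x\<^sub>i)\<close> satisfies \<open>Q\<^sub>1(c\<^sup>e) = c\<close> and \<open>P c = P(c\<^sup>e) = Q\<^sub>1 c = 0\<close>,
  which gives (v)--(vii); these in turn give all the properties of \<open>b\<close> back for \<open>c x\<^sub>j\<close>
  and its exchange \<open>c\<^sup>e t\<^sub>j\<close>. Induction on \<open>t\<close> then covers all of \<open>\<B>\<^bsub>[2t]\<^esub>\<close>.\<close>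

subsection \<open>Linear algebra over \<open>\<F>\<^sub>2\<close>\<close>

definition coeff :: "relt \<Rightarrow> mon \<Rightarrow> bit" where
  "coeff v m = (if m \<in> v then 1 else 0)"

lemma of_nat_bit: "(of_nat n :: bit) = (if odd n then 1 else 0)"
  by (induction n) auto

lemma coeff_eqI: "(\<And>m. coeff a m = coeff b m) \<Longrightarrow> a = b"
  unfolding coeff_def by (metis (full_types) one_neq_zero subsetI subset_antisym)

lemma coeff_radd: "coeff (radd a b) m = coeff a m + coeff b m"
  unfolding coeff_def radd_def by auto

lemma coeff_lsum: "finite A \<Longrightarrow> coeff (lsum F A) m = (\<Sum>a\<in>A. coeff (F a) m)"
  unfolding coeff_def lsum_def by (simp add: sum.If_cases of_nat_bit Int_def)

lemma sum_coeff_mult: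
  assumes "finite U" "S \<subseteq> U"
  shows "(\<Sum>a\<in>U. coeff S a * f a) = (\<Sum>a\<in>S. f a)"
proof -
  have "(\<Sum>a\<in>U. coeff S a * f a) = (\<Sum>a\<in>U. if a \<in> S then f a else 0)"
    unfolding coeff_def by (rule sum.cong) auto
  also have "\<dots> = (\<Sum>a\<in>S. f a)"
    using assms by (simp add: sum.If_cases Int_absorb1)
  finally show ?thesis .
qed

lemma lsum_subset: "lsum F A \<subseteq> (\<Union>a\<in>A. F a)"
  unfolding lsum_def by (auto dest!: odd_pos simp: card_gt_0_iff)

lemma lsum_lsum:
  assumes "finite A" "\<And>a. a \<in> A \<Longrightarrow> finite (G a)"
  shows "lsum F (lsum G A) = lsum (\<lambda>a. lsum F (G a)) A"
proof (rule coeff_eqI)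
  fix m
  define U where "U = (\<Union>a\<in>A. G a)"
  have U: "finite U" "lsum G A \<subseteq> U"
    using assms lsum_subset[of G A] unfolding U_def by auto
  then have "finite (lsum G A)" by (rule finite_subset[rotated])
  then have "coeff (lsum F (lsum G A)) m = (\<Sum>u\<in>U. coeff (lsum G A) u * coeff (F u) m)"
    by (simp only: coeff_lsum sum_coeff_mult U)
  also have "\<dots> = (\<Sum>u\<in>U. \<Sum>a\<in>A. coeff (G a) u * coeff (F u) m)"
    by (simp only: coeff_lsum assms(1) sum_distrib_right)
  also have "\<dots> = (\<Sum>a\<in>A. \<Sum>u\<in>U. coeff (G a) u * coeff (F u) m)"
    by (rule sum.swap)
  also have "\<dots> = (\<Sum>a\<in>A. \<Sum>u\<in>G a. coeff (F u) m)"
    by (rule sum.cong[OF refl], rule sum_coeff_mult[OF U(1)]) (auto simp: U_def)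
  also have "\<dots> = (\<Sum>a\<in>A. coeff (lsum F (G a)) m)"
    by (rule sum.cong[OF refl], rule coeff_lsum[symmetric], rule assms(2))
  also have "\<dots> = coeff (lsum (\<lambda>a. lsum F (G a)) A) m"
    by (simp only: coeff_lsum assms(1))
  finally show "coeff (lsum F (lsum G A)) m = coeff (lsum (\<lambda>a. lsum F (G a)) A) m" .
qed

lemma lsum_radd_fun:
  "finite A \<Longrightarrow> lsum (\<lambda>a. radd (F a) (G a)) A = radd (lsum F A) (lsum G A)"
  by (rule coeff_eqI) (simp only: coeff_lsum coeff_radd sum.distrib)

lemma lsum_radd:
  assumes "finite a" "finite b"
  shows "lsum F (radd a b) = radd (lsum F a) (lsum F b)"
proof (rule coeff_eqI)
  fix m
  let ?U = "a \<union> b" and ?c = "\<lambda>w. coeff (F w) m"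
  have U: "finite ?U" "radd a b \<subseteq> ?U" "a \<subseteq> ?U" "b \<subseteq> ?U"
    using assms unfolding radd_def by auto
  then have "coeff (lsum F (radd a b)) m = (\<Sum>w\<in>?U. coeff (radd a b) w * ?c w)"
    by (simp only: coeff_lsum sum_coeff_mult finite_subset)
  also have "\<dots> = (\<Sum>w\<in>?U. coeff a w * ?c w) + (\<Sum>w\<in>?U. coeff b w * ?c w)"
    by (simp only: coeff_radd distrib_right sum.distrib)
  also have "\<dots> = coeff (radd (lsum F a) (lsum F b)) m"
    by (simp only: coeff_radd coeff_lsum assms sum_coeff_mult U)
  finally show "coeff (lsum F (radd a b)) m = coeff (radd (lsum F a) (lsum F b)) m" .
qed

lemma lsum_disjoint_family:
  assumes "disjoint_family_on F A"
  shows "lsum F A = (\<Union>a\<in>A. F a)"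
proof (rule set_eqI)
  fix m
  show "m \<in> lsum F A \<longleftrightarrow> m \<in> (\<Union>a\<in>A. F a)"
  proof (cases "m \<in> (\<Union>a\<in>A. F a)")
    case True
    then obtain a where a: "a \<in> A" "m \<in> F a" by blast
    with assms have one: "{a\<in>A. m \<in> F a} = {a}"
      unfolding disjoint_family_on_def by blast
    show ?thesis using True unfolding lsum_def mem_Collect_eq one by simp
  next
    case False
    then have none: "{a\<in>A. m \<in> F a} = {}" by blast
    show ?thesis using False unfolding lsum_def mem_Collect_eq none by simp
  qed
qed

lemma lsum_singletons:
  assumes "\<And>a. F a = (if P a then {h a} else {})" "inj_on h {a. P a}"
  shows "lsum F A = h ` {a\<in>A. P a}"
proof -
  have "disjoint_family_on F A"
    using assms unfolding disjoint_family_on_def inj_on_def by auto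
  then have "lsum F A = (\<Union>a\<in>A. F a)" by (rule lsum_disjoint_family)
  then show ?thesis by (auto simp: assms split: if_splits)
qed

lemma lin_empty [simp]: "lin f {} = {}"
  unfolding lin_def lsum_def by simp

lemma lin_singleton [simp]: "lin f {w} = f w"
  unfolding lin_def lsum_def by (auto simp: Collect_conv_if)

lemma lin_zero [simp]: "lin (\<lambda>_. {}) v = {}"
  unfolding lin_def lsum_def by simp

lemma lin_singletons [simp]: "lin (\<lambda>w. {w}) v = v"
  unfolding lin_def by (subst lsum_singletons[where P = "\<lambda>_. True"]) auto

lemma radd_commute: "radd a b = radd b a"
  unfolding radd_def by auto

lemma radd_assoc: "radd (radd a b) c = radd a (radd b c)"
  unfolding radd_def by auto

lemma radd_left_commute: "radd a (radd b c) = radd b (radd a c)"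
  unfolding radd_def by auto

lemmas radd_ac = radd_commute radd_assoc radd_left_commute

lemma radd_empty [simp]: "radd a {} = a" "radd {} a = a"
  unfolding radd_def by auto

lemma radd_self [simp]: "radd a a = {}" "radd a (radd a b) = b"
  unfolding radd_def by auto

lemma radd_disjoint: "a \<inter> b = {} \<Longrightarrow> radd a b = a \<union> b"
  unfolding radd_def by auto

subsection \<open>Explicit formulas on monomials\<close>

definition mul_x :: "nat \<Rightarrow> mon \<Rightarrow> relt" where
  "mul_x i w = (if i \<in> snd w then {} else {(fst w, insert i (snd w))})"
definition mul_t :: "nat \<Rightarrow> mon \<Rightarrow> relt" where
  "mul_t i w = (if i \<in> fst w then {} else {(insert i (fst w), snd w)})"

lemma lin_mul_x: "lin (mul_x i) A = (\<lambda>w. (fst w, insert i (snd w))) ` {w \<in> A. i \<notin> snd w}"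
  unfolding lin_def
  by (rule lsum_singletons[where P = "\<lambda>w. i \<notin> snd w"])
    (auto simp: mul_x_def inj_on_def insert_ident prod_eq_iff)

lemma lin_mul_t: "lin (mul_t i) A = (\<lambda>w. (insert i (fst w), snd w)) ` {w \<in> A. i \<notin> fst w}"
  unfolding lin_def
  by (rule lsum_singletons[where P = "\<lambda>w. i \<notin> fst w"])
    (auto simp: mul_t_def inj_on_def insert_ident prod_eq_iff)

lemma exch_eq: "exch v = prod.swap ` v"
  unfolding exch_def lin_def
  by (rule lsum_singletons[where P = "\<lambda>_. True", simplified]) (auto simp: exm_def)

lemma Q1m_eq: "Q1m (I, J) = (\<lambda>j. (insert j I, J - {j})) ` {j \<in> J. j \<notin> I}"
  unfolding Q1m_def fst_conv snd_conv
  by (rule lsum_singletons[where P = "\<lambda>j. j \<notin> I"]) (auto simp: mmul_def inj_on_def)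

lemma Pm_eq:
  "Pm (I, J) = (\<lambda>K. (K \<union> I, J - K)) ` {K. K \<subseteq> J \<and> card K = 2 \<and> K \<inter> I = {}}"
  unfolding Pm_def fst_conv snd_conv
  by (subst lsum_singletons[where P = "\<lambda>K. K \<inter> I = {}"])
    (auto simp: mmul_def inj_on_def)

lemma disjoint_family_mmul_right: "disjoint_family_on (\<lambda>m. mmul m n) A"
  unfolding disjoint_family_on_def mmul_def by (auto simp: prod_eq_iff)

lemma rmul_singleton: "rmul v {n} = lin (\<lambda>m. mmul m n) v"
proof -
  have "disjoint_family_on (\<lambda>(m, n'). mmul m n') (v \<times> {n})"
    unfolding disjoint_family_on_def mmul_def by (auto simp: prod_eq_iff)
  then have "rmul v {n} = (\<Union>(m, n') \<in> v \<times> {n}. mmul m n')"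
    unfolding rmul_def by (rule lsum_disjoint_family)
  also have "\<dots> = lin (\<lambda>m. mmul m n) v"
    unfolding lin_def lsum_disjoint_family[OF disjoint_family_mmul_right] by auto
  finally show ?thesis .
qed

lemma rmul_xg: "rmul v (xg i) = lin (mul_x i) v"
  unfolding xg_def rmul_singleton
  by (rule arg_cong[where f = "\<lambda>f. lin f v"]) (auto simp: fun_eq_iff mul_x_def mmul_def)

lemma rmul_tg: "rmul v (tg i) = lin (mul_t i) v"
  unfolding tg_def rmul_singleton
  by (rule arg_cong[where f = "\<lambda>f. lin f v"]) (auto simp: fun_eq_iff mul_t_def mmul_def)

lemma two_subsets_insert:
  "{K. K \<subseteq> insert i J \<and> card K = 2} = {K. K \<subseteq> J - {i} \<and> card K = 2} \<union> (\<lambda>j. {i, j}) ` (J - {i})"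
  by (auto simp: card_2_iff)

lemma two_subsets_containing:
  "i \<in> J \<Longrightarrow> {K. K \<subseteq> J \<and> card K = 2 \<and> i \<in> K} = (\<lambda>j. {i, j}) ` (J - {i})"
  by (auto simp: card_2_iff)

lemma Q1_mul_x_mon:
  "lin Q1m (mul_x i (I, J)) = radd (lin (mul_x i) (Q1m (I, J))) (lin (mul_t i) {(I, J)})"
  by (auto simp: mul_x_def mul_t_def Q1m_eq lin_mul_x radd_def image_iff insert_absorb; blast)

lemma Q1_mul_t_mon: "lin Q1m (mul_t i (I, J)) = lin (mul_t i) (Q1m (I, J))"
  by (auto simp: mul_t_def Q1m_eq lin_mul_t image_iff insert_commute; blast)

lemma Pop_mul_t_mon: "lin Pm (mul_t i (I, J)) = lin (mul_t i) (Pm (I, J))"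
  by (auto simp: mul_t_def Pm_eq lin_mul_t image_iff; blast)

text \<open>A 2-subset of \<open>J \<union> {i}\<close> either avoids \<open>i\<close> or is \<open>{i, j}\<close>; the latter kind yields the
  term \<open>Q\<^sub>1(w) t\<^sub>i\<close>. When \<open>i \<in> J\<close> these are exactly the terms of \<open>P(w) x\<^sub>i\<close>
  that survive, and the two sides cancel.\<close>

lemma Pop_mul_x_mon:
  "lin Pm (mul_x i (I, J)) = radd (lin (mul_x i) (Pm (I, J))) (lin (mul_t i) (Q1m (I, J)))"
proof -
  have x_Pm: "lin (mul_x i) (Pm (I, J)) =
      (\<lambda>K. (K \<union> I, insert i (J - K))) ` {K. K \<subseteq> J \<and> card K = 2 \<and> K \<inter> I = {} \<and> i \<notin> J - K}"
    by (auto simp: Pm_eq lin_mul_x image_iff; blast)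
  have t_Q1m: "lin (mul_t i) (Q1m (I, J)) =
      (\<lambda>j. ({i, j} \<union> I, J - {j})) ` {j \<in> J - {i}. j \<notin> I \<and> i \<notin> I}"
    by (auto simp: Q1m_eq lin_mul_t image_iff; blast)
  show ?thesis
  proof (cases "i \<in> J")
    case True
    have pairs: "{K. K \<subseteq> J \<and> card K = 2 \<and> K \<inter> I = {} \<and> i \<notin> J - K} =
        (\<lambda>j. {i, j}) ` {j \<in> J - {i}. j \<notin> I \<and> i \<notin> I}"
    proof -
      have "{K. K \<subseteq> J \<and> card K = 2 \<and> K \<inter> I = {} \<and> i \<notin> J - K} =
          {K \<in> {K. K \<subseteq> J \<and> card K = 2 \<and> i \<in> K}. K \<inter> I = {}}"
        using True by blast
      then show ?thesis unfolding two_subsets_containing[OF True] by auto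
    qed
    have "lin (mul_x i) (Pm (I, J)) = lin (mul_t i) (Q1m (I, J))"
      unfolding x_Pm t_Q1m pairs image_image using True by (intro image_cong) auto
    then show ?thesis using True by (simp add: mul_x_def radd_def)
  next
    case False
    have split: "{K. K \<subseteq> insert i J \<and> card K = 2 \<and> K \<inter> I = {}} =
        {K. K \<subseteq> J \<and> card K = 2 \<and> K \<inter> I = {}} \<union> (\<lambda>j. {i, j}) ` {j \<in> J. j \<notin> I \<and> i \<notin> I}"
      using two_subsets_insert[of i J] False by auto
    have "lin Pm (mul_x i (I, J)) = Pm (I, insert i J)"
      using False by (simp add: mul_x_def)
    also have "\<dots> = lin (mul_x i) (Pm (I, J)) \<union> lin (mul_t i) (Q1m (I, J))"
      unfolding x_Pm t_Q1m unfolding Pm_eq split image_Un image_image using False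
      by (intro arg_cong2[where f = "(\<union>)"] image_cong) auto
    also have "\<dots> = radd (lin (mul_x i) (Pm (I, J))) (lin (mul_t i) (Q1m (I, J)))"
    proof (rule radd_disjoint[symmetric])
      show "lin (mul_x i) (Pm (I, J)) \<inter> lin (mul_t i) (Q1m (I, J)) = {}"
        unfolding x_Pm t_Q1m using False by auto
    qed
    finally show ?thesis .
  qed
qed

subsection \<open>Commutation rules on elements\<close>

text \<open>The representation type also contains infinite sums of monomials, on which \<open>lsum\<close>
  is not additive; the rules below are valid on genuine elements of \<open>R\<close>.\<close>

definition in_R :: "relt \<Rightarrow> bool" where
  "in_R v \<longleftrightarrow> finite v \<and> (\<forall>w \<in> v. finite (fst w) \<and> finite (snd w))"

lemma in_R_monomialE:
  "in_R v \<Longrightarrow> w \<in> v \<Longrightarrow> (\<And>I J. w = (I, J) \<Longrightarrow> finite I \<Longrightarrow> finite J \<Longrightarrow> P) \<Longrightarrow> P"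
  unfolding in_R_def by (cases w) auto

lemma in_R_radd: "in_R a \<Longrightarrow> in_R b \<Longrightarrow> in_R (radd a b)"
  unfolding in_R_def radd_def by auto

lemma in_R_lin:
  assumes "in_R v" "\<And>I J. finite I \<Longrightarrow> finite J \<Longrightarrow> in_R (f (I, J))"
  shows "in_R (lin f v)"
proof -
  have "in_R (f w)" if "w \<in> v" for w
    using assms(1) that by (rule in_R_monomialE) (simp add: assms(2))
  then have "in_R (\<Union>w\<in>v. f w)"
    using assms(1) unfolding in_R_def by auto
  then show ?thesis
    using lsum_subset[of f v] unfolding in_R_def lin_def by (auto intro: finite_subset)
qed

lemma in_R_Q1m: "finite I \<Longrightarrow> finite J \<Longrightarrow> in_R (Q1m (I, J))"
  unfolding in_R_def Q1m_eq by auto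

lemma in_R_Pm: "finite I \<Longrightarrow> finite J \<Longrightarrow> in_R (Pm (I, J))"
proof -
  assume "finite I" "finite J"
  moreover have "{K. K \<subseteq> J \<and> card K = 2 \<and> K \<inter> I = {}} \<subseteq> Pow J" by auto
  ultimately show ?thesis
    unfolding in_R_def Pm_eq by (auto intro: finite_subset)
qed

lemma in_R_mul_x: "finite I \<Longrightarrow> finite J \<Longrightarrow> in_R (mul_x i (I, J))"
  unfolding in_R_def mul_x_def by auto

lemma in_R_mul_t: "finite I \<Longrightarrow> finite J \<Longrightarrow> in_R (mul_t i (I, J))"
  unfolding in_R_def mul_t_def by auto

lemma in_R_singleton: "finite I \<Longrightarrow> finite J \<Longrightarrow> in_R {(I, J)}"
  unfolding in_R_def by auto

lemma in_R_Q1: "in_R v \<Longrightarrow> in_R (Q1 v)"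
  unfolding Q1_def by (rule in_R_lin) (simp_all add: in_R_Q1m)

lemma in_R_exch: "in_R v \<Longrightarrow> in_R (exch v)"
  unfolding in_R_def exch_eq by auto

lemma in_R_rmul_xg: "in_R v \<Longrightarrow> in_R (rmul v (xg i))"
  unfolding rmul_xg by (rule in_R_lin) (simp_all add: in_R_mul_x)

lemma in_R_rmul_tg: "in_R v \<Longrightarrow> in_R (rmul v (tg i))"
  unfolding rmul_tg by (rule in_R_lin) (simp_all add: in_R_mul_t)

lemmas in_R_ops = in_R_radd in_R_Q1 in_R_exch in_R_rmul_xg in_R_rmul_tg

lemma lin_cong: "(\<And>w. w \<in> v \<Longrightarrow> f w = g w) \<Longrightarrow> lin f v = lin g v"
  unfolding lin_def lsum_def by (metis (mono_tags, lifting) Collect_cong)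

lemma lin_lin:
  assumes "in_R v" "\<And>I J. finite I \<Longrightarrow> finite J \<Longrightarrow> in_R (g (I, J))"
  shows "lin f (lin g v) = lin (\<lambda>w. lin f (g w)) v"
proof -
  have "finite (g w)" if "w \<in> v" for w
    using assms(1) that by (rule in_R_monomialE) (use assms(2) in \<open>auto simp: in_R_def\<close>)
  then show ?thesis
    unfolding lin_def using assms(1) by (intro lsum_lsum) (auto simp: in_R_def)
qed

lemma lin_radd: "in_R a \<Longrightarrow> in_R b \<Longrightarrow> lin f (radd a b) = radd (lin f a) (lin f b)"
  unfolding lin_def in_R_def by (simp add: lsum_radd)

lemma lin_commute:
  assumes v: "in_R v"
    and fin: "\<And>I J. finite I \<Longrightarrow> finite J \<Longrightarrow> in_R (g (I, J)) \<and> in_R (f' (I, J)) \<and> in_R (k (I, J))"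
    and law: "\<And>I J. finite I \<Longrightarrow> finite J \<Longrightarrow>
      lin f (g (I, J)) = radd (lin g' (f' (I, J))) (lin h (k (I, J)))"
  shows "lin f (lin g v) = radd (lin g' (lin f' v)) (lin h (lin k v))"
proof -
  have "lin f (lin g v) = lin (\<lambda>w. lin f (g w)) v"
    using v fin by (simp add: lin_lin)
  also have "\<dots> = lin (\<lambda>w. radd (lin g' (f' w)) (lin h (k w))) v"
  proof (rule lin_cong)
    fix w assume "w \<in> v"
    with v show "lin f (g w) = radd (lin g' (f' w)) (lin h (k w))"
      by (rule in_R_monomialE) (simp add: law)
  qed
  also have "\<dots> = radd (lin (\<lambda>w. lin g' (f' w)) v) (lin (\<lambda>w. lin h (k w)) v)"
    using v unfolding lin_def in_R_def by (simp add: lsum_radd_fun)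
  also have "\<dots> = radd (lin g' (lin f' v)) (lin h (lin k v))"
    using v fin by (simp add: lin_lin)
  finally show ?thesis .
qed

lemma lin_commute_simple:
  assumes "in_R v"
    and "\<And>I J. finite I \<Longrightarrow> finite J \<Longrightarrow> in_R (g (I, J)) \<and> in_R (f' (I, J))"
    and "\<And>I J. finite I \<Longrightarrow> finite J \<Longrightarrow> lin f (g (I, J)) = lin g' (f' (I, J))"
  shows "lin f (lin g v) = lin g' (lin f' v)"
proof -
  have "lin f (lin g v) = radd (lin g' (lin f' v)) (lin (\<lambda>_. {}) (lin (\<lambda>w. {w}) v))"
    by (rule lin_commute) (use assms in \<open>simp_all add: in_R_singleton\<close>)
  then show ?thesis by simp
qed

lemma Q1_rmul_xg: "in_R v \<Longrightarrow> Q1 (rmul v (xg i)) = radd (rmul (Q1 v) (xg i)) (rmul v (tg i))"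
  unfolding Q1_def rmul_xg rmul_tg
  using lin_commute[where k = "\<lambda>w. {w}"]
  by (simp add: Q1_mul_x_mon in_R_mul_x in_R_Q1m in_R_singleton)

lemma Q1_rmul_tg: "in_R v \<Longrightarrow> Q1 (rmul v (tg i)) = rmul (Q1 v) (tg i)"
  unfolding Q1_def rmul_tg
  by (rule lin_commute_simple) (simp_all add: Q1_mul_t_mon in_R_mul_t in_R_Q1m)

lemma Pop_rmul_xg:
  "in_R v \<Longrightarrow> Pop (rmul v (xg i)) = radd (rmul (Pop v) (xg i)) (rmul (Q1 v) (tg i))"
  unfolding Pop_def Q1_def rmul_xg rmul_tg
  by (rule lin_commute) (simp_all add: Pop_mul_x_mon in_R_mul_x in_R_Pm in_R_Q1m)

lemma Pop_rmul_tg: "in_R v \<Longrightarrow> Pop (rmul v (tg i)) = rmul (Pop v) (tg i)"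
  unfolding Pop_def rmul_tg
  by (rule lin_commute_simple) (simp_all add: Pop_mul_t_mon in_R_mul_t in_R_Pm)

lemma exch_rmul_xg: "exch (rmul v (xg i)) = rmul (exch v) (tg i)"
  unfolding exch_eq rmul_xg rmul_tg lin_mul_x lin_mul_t by force

lemma exch_rmul_tg: "exch (rmul v (tg i)) = rmul (exch v) (xg i)"
  unfolding exch_eq rmul_xg rmul_tg lin_mul_x lin_mul_t by force

lemma exch_exch: "exch (exch v) = v"
  unfolding exch_eq by (simp add: image_image)

lemma exch_radd: "exch (radd a b) = radd (exch a) (exch b)"
  unfolding exch_eq radd_def by (simp add: image_Un image_set_diff)

lemma Q1_radd: "in_R a \<Longrightarrow> in_R b \<Longrightarrow> Q1 (radd a b) = radd (Q1 a) (Q1 b)"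
  unfolding Q1_def by (rule lin_radd)

lemma Pop_radd: "in_R a \<Longrightarrow> in_R b \<Longrightarrow> Pop (radd a b) = radd (Pop a) (Pop b)"
  unfolding Pop_def by (rule lin_radd)

lemma rmul_tg_radd:
  "in_R a \<Longrightarrow> in_R b \<Longrightarrow> rmul (radd a b) (tg i) = radd (rmul a (tg i)) (rmul b (tg i))"
  unfolding rmul_tg by (rule lin_radd)

lemma ops_empty [simp]:
  "Q1 {} = {}" "Pop {} = {}" "exch {} = {}" "rmul {} (xg i) = {}" "rmul {} (tg i) = {}"
  unfolding Q1_def Pop_def exch_def rmul_xg rmul_tg by simp_all

lemmas operator_rules = Q1_rmul_xg Q1_rmul_tg Pop_rmul_xg Pop_rmul_tg
  exch_rmul_xg exch_rmul_tg exch_exch Q1_radd Pop_radd exch_radd rmul_tg_radd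

subsection \<open>The induction\<close>

text \<open>The last two clauses are not part of the theorem but are needed to carry the induction.\<close>

definition even_inv :: "relt \<Rightarrow> bool" where
  "even_inv b \<longleftrightarrow> in_R b \<and> Q1 b = Q1 (exch b) \<and> Q1 (exch (Q1 b)) = radd b (exch b)
     \<and> Pop (exch (Q1 b)) = Q1 b \<and> Pop b = {} \<and> Pop (exch b) = {}
     \<and> Q1 (Q1 b) = {} \<and> Pop (Q1 b) = {}"

definition odd_inv :: "relt \<Rightarrow> bool" where
  "odd_inv c \<longleftrightarrow> in_R c \<and> Q1 (exch c) = c \<and> Pop c = {} \<and> Pop (exch c) = {} \<and> Q1 c = {}"

lemma even_inv_rone: "even_inv rone"
  unfolding even_inv_def rone_def Q1_def Pop_def exch_def
  by (simp add: in_R_def Q1m_eq Pm_eq exm_def)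

lemma even_inv_exch: "even_inv b \<Longrightarrow> even_inv (exch b)"
  unfolding even_inv_def by (auto simp: exch_exch in_R_exch radd_commute)

lemma odd_inv_Q1_rmul_xg:
  assumes "even_inv b"
  shows "odd_inv (Q1 (rmul b (xg i)))"
proof -
  have b: "in_R b" and i: "Q1 b = Q1 (exch b)" "Q1 (exch (Q1 b)) = radd b (exch b)"
    "Pop (exch (Q1 b)) = Q1 b" "Pop b = {}" "Pop (exch b) = {}" "Q1 (Q1 b) = {}" "Pop (Q1 b) = {}"
    using assms unfolding even_inv_def by auto
  have c: "Q1 (rmul b (xg i)) = radd (rmul (Q1 b) (xg i)) (rmul b (tg i))"
    using b by (rule Q1_rmul_xg)
  show ?thesis
    unfolding odd_inv_def c using b i by (simp add: operator_rules in_R_ops radd_ac)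
qed

lemma even_inv_rmul_xg: "odd_inv c \<Longrightarrow> even_inv (rmul c (xg j))"
  unfolding odd_inv_def even_inv_def by (simp add: operator_rules in_R_ops radd_ac)

lemma Bev_even_inv: "b \<in> Bev t \<Longrightarrow> even_inv b \<and> exch b \<in> Bev t"
proof (induction t arbitrary: b)
  case 0
  have "exch rone = rone"
    by (simp add: exch_eq rone_def)
  with 0 show ?case using even_inv_rone by simp
next
  case (Suc t)
  then obtain b0 where b0: "b0 \<in> Bev t" and
    b: "b = rmul (Q1 (rmul b0 (xg (2*t+1)))) (xg (2*t+2))
      \<or> b = rmul (exch (Q1 (rmul b0 (xg (2*t+1))))) (tg (2*t+2))"
    by auto
  define c where "c = Q1 (rmul b0 (xg (2*t+1)))"
  have "odd_inv c"
    unfolding c_def using Suc.IH b0 by (simp add: odd_inv_Q1_rmul_xg)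
  then have inv: "even_inv (rmul c (xg (2*t+2)))"
    by (rule even_inv_rmul_xg)
  have exch_x: "exch (rmul c (xg (2*t+2))) = rmul (exch c) (tg (2*t+2))"
    by (rule exch_rmul_xg)
  have exch_t: "exch (rmul (exch c) (tg (2*t+2))) = rmul c (xg (2*t+2))"
    by (simp add: exch_rmul_tg exch_exch)
  have mem: "rmul c (xg (2*t+2)) \<in> Bev (Suc t)" "rmul (exch c) (tg (2*t+2)) \<in> Bev (Suc t)"
    unfolding c_def using b0 by auto
  from b show ?case
    unfolding c_def[symmetric]
    using inv even_inv_exch[OF inv] exch_x exch_t mem by auto
qed

theorem mainTheorem10:
  fixes t :: nat and b :: relt
  assumes "b \<in> B (2*t)"
  shows "exch b \<in> B (2*t)
    \<and> Q1 b = Q1 (exch b)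
    \<and> Q1 (exch (Q1 b)) = radd b (exch b)
    \<and> Pop (exch (Q1 b)) = Q1 b
    \<and> Pop b = {} \<and> Pop (exch b) = {}
    \<and> Q1 (exch (Q1 (rmul b (xg (2*t+1))))) = Q1 (rmul b (xg (2*t+1)))
    \<and> Pop (Q1 (rmul b (xg (2*t+1)))) = {}
    \<and> Pop (exch (Q1 (rmul b (xg (2*t+1))))) = {}"
proof -
  have B: "B (2*t) = Bev t"
    by (simp add: B_def)
  then have "even_inv b" "exch b \<in> B (2*t)"
    using assms Bev_even_inv by auto
  moreover have "odd_inv (Q1 (rmul b (xg (2*t+1))))"
    using \<open>even_inv b\<close> by (rule odd_inv_Q1_rmul_xg)
  ultimately show ?thesis
    unfolding even_inv_def odd_inv_def by blast
qed

end
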